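(* Any linear automorphism ${\bf A}$ of $L_{1,3}$ is a scalar multiple of a signed permutation induced by a vertex relabeling, i.e., ${\bf A}=c\,{\bf S}{\bf P}$ with $c\in\mathbb C\setminus\{0\}$, ${\bf S}$ a $3\times3$ diagonal matrix with entries $\pm1$, and ${\bf P}$ a permutation matrix sending $e_{\{i,j\}}$ to $e_{\{\sigma(i),\sigma(j)\}}$ for some permutation $\sigma$ of $\{1,2,3\}$.
   Context: Coordinates of $\mathbb C^3$ are indexed by the edges $\{1,2\},\{1,3\},\{2,3\}$. For complex numbers ${\bf p}_1,{\bf p}_2,{\bf p}_3$, $m({\bf p})$ has coordinates $m_{ij}=({\bf p}_i-{\bf p}_j)^2$; $M_{1,3}$ is the image of $m$, and $L_{1,3}=\{l\in\mathbb C^3:(l_{12}^2,l_{13}^2,l_{23}^2)\in M_{1,3}\}$. A linear automorphism of $L_{1,3}$ is a non-singular $3\times 3$ complex matrix mapping $L_{1,3}$ bijectively onto itself. *)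

theory Defs
  imports "HOL-Analysis.Analysis" "HOL-Library.Numeral_Type"
begin

text \<open>Vertices are the elements 1,2,3 of type 3. Coordinates of C^3 are also indexed
  by type 3: coordinate 1 is edge {1,2}, coordinate 2 is edge {1,3}, coordinate 3 is edge {2,3}.\<close>

definition edge_verts :: "3 \<Rightarrow> 3 set" where
  "edge_verts e = (if e = 1 then {1,2} else if e = 2 then {1,3} else {2,3})"

definition edge_fst :: "3 \<Rightarrow> 3" where
  "edge_fst e = (if e = 3 then 2 else 1)"

definition edge_snd :: "3 \<Rightarrow> 3" where
  "edge_snd e = (if e = 1 then 2 else 3)"

definition meas :: "(3 \<Rightarrow> complex) \<Rightarrow> complex ^ 3" where
  "meas p = (\<chi> e. (p (edge_fst e) - p (edge_snd e))^2)"

definition M13 :: "(complex ^ 3) set" where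
  "M13 = range meas"

definition L13 :: "(complex ^ 3) set" where
  "L13 = {l. (\<chi> e. (l $ e)^2) \<in> M13}"

definition lin_aut_L13 :: "complex ^ 3 ^ 3 \<Rightarrow> bool" where
  "lin_aut_L13 A \<longleftrightarrow> invertible A \<and> (\<lambda>l. A *v l) ` L13 = L13"

definition edge_perm_matrix :: "(3 \<Rightarrow> 3) \<Rightarrow> complex ^ 3 ^ 3" where
  "edge_perm_matrix \<sigma> = (\<chi> a b. if edge_verts a = \<sigma> ` edge_verts b then 1 else 0)"

definition sign_diag :: "complex ^ 3 ^ 3 \<Rightarrow> bool" where
  "sign_diag S \<longleftrightarrow> (\<forall>a b. a \<noteq> b \<longrightarrow> S $ a $ b = 0) \<and> (\<forall>a. S $ a $ a = 1 \<or> S $ a $ a = -1)"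

end

theory Submission
  imports Defs
begin

text \<open>
  The set L13 is the union of the four planes l12 \<plusminus> l13 \<plusminus> l23 = 0, i.e. of the kernels of the
  bilinear forms dot m for m in tetra, the even vertices of the cube {-1,1}^3. A line contained
  in none of finitely many hyperplanes is not covered by them, so a linear automorphism A of L13
  maps each of the four planes into one of them; dually, the transpose of A maps each
  vertex of tetra to a nonzero multiple of a vertex, injectively. Since the vanishing of the sum
  of the four vertices is their only linear relation, all these multiples are one scalar c, and
  the transpose of A/c permutes tetra. It then permutes the edge midpoints \<plusminus>e_i of the
  tetrahedron, so A/c is a signed permutation matrix. Finally, every permutation of the three
  edges of the triangle is induced by the vertex relabeling that acts in the same way on the
  opposite vertices.
\<close>

text \<open>The complex bilinear form; \<^const>\<open>inner\<close> on complex vectors is the real inner product.\<close>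

definition dot :: "'a::comm_semiring_1 ^ 'n \<Rightarrow> 'a ^ 'n \<Rightarrow> 'a" where
  "dot x y = (\<Sum>i\<in>UNIV. x $ i * y $ i)"

lemma dot_matrix_vector_mult: "dot x (A *v y) = dot (x v* A) y"
  unfolding dot_def matrix_vector_mult_def vector_matrix_mult_def
  by (simp add: sum_distrib_left sum_distrib_right mult_ac) (rule sum.swap)

lemma dot_add_right: "dot x (y + z) = dot x y + dot x z"
  by (simp add: dot_def distrib_left sum.distrib)

lemma dot_scale_right: "dot x (c *s y) = c * dot x y"
  by (simp add: dot_def sum_distrib_left mult_ac)

lemma inj_vector_matrix_mult:
  fixes A :: "'a::field ^ 'n ^ 'm"
  assumes "invertible A"
  shows "inj (\<lambda>x. x v* A)"
  by (metis assms inj_on_inverseI invertible_def vector_matrix_mul_assoc vector_matrix_mul_rid)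

lemma sum_vector_matrix_mult: "(\<Sum>i\<in>I. f i) v* A = (\<Sum>i\<in>I. f i v* A)"
  by (induction I rule: infinite_finite_induct) (simp_all add: vector_matrix_left_distrib)

lemma axis_vector_matrix_mult: "axis i 1 v* A = A $ i"
  by (simp add: vector_matrix_mult_def axis_def vec_eq_iff if_distrib if_distribR cong: if_cong)

lemma vector_matrix_mult_mat: "x v* mat k = k *s (x :: 'a::comm_semiring_1 ^ 'n)"
  by (simp add: vector_matrix_mult_def mat_def vec_eq_iff if_distrib if_distribR mult.commute
      cong: if_cong)

lemma diag_mult_component:
  "((\<chi> a b. if a = b then d a else 0) ** B) $ i $ j = d i * (B $ i $ j :: 'a::semiring_1)"
proof -
  have "((\<chi> a b. if a = b then d a else 0) ** B) $ i $ j
      = (\<Sum>l\<in>UNIV. (if i = l then d i else 0) * B $ l $ j)"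
    unfolding matrix_matrix_mult_def by (simp cong: if_cong)
  also have "\<dots> = (\<Sum>l\<in>UNIV. if l = i then d i * B $ l $ j else 0)"
    by (rule sum.cong) auto
  finally show ?thesis
    by simp
qed

lemma mat_mult_component: "(mat k ** B) $ i $ j = k * (B $ i $ j :: 'a::semiring_1)"
  using diag_mult_component[of "\<lambda>_. k"] by (simp add: mat_def)

lemma invertible_mat: "k \<noteq> 0 \<Longrightarrow> invertible (mat k :: 'a::field ^ 'n ^ 'n)"
  unfolding invertible_def
  by (intro exI[of _ "mat (inverse k)"]) (simp add: vec_eq_iff mat_mult_component, simp add: mat_def)

lemma invertible_rows_not_parallel:
  fixes T :: "'a::field ^ 'n ^ 'm"
  assumes "invertible T" and "i \<noteq> i'"
  shows "T $ i \<noteq> c *s T $ i'"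
proof
  assume "T $ i = c *s T $ i'"
  then have "(axis i 1 - c *s axis i' 1) v* T = 0"
    by (simp add: vector_matrix_mult_diff_distrib scalar_vector_matrix_assoc axis_vector_matrix_mult)
  then have "axis i 1 - c *s axis i' 1 = 0"
    using inj_vector_matrix_mult[OF assms(1)] by (metis injD vector_matrix_mult_0)
  then have "(axis i 1 - c *s axis i' 1) $ i = 0"
    by simp
  with \<open>i \<noteq> i'\<close> show False
    by (simp add: axis_def)
qed

lemma ex_3: "(\<exists>i::3. P i) \<longleftrightarrow> P 1 \<or> P 2 \<or> P 3"
  by (metis exhaust_3)

lemma line_in_finite_union_of_zero_sets:
  fixes a b :: "'k \<Rightarrow> 'a::field_char_0"
  assumes "finite K" and cover: "\<And>x. \<exists>k\<in>K. a k + x * b k = 0"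
  shows "\<exists>k\<in>K. a k = 0 \<and> b k = 0"
proof -
  have "UNIV = (\<Union>k\<in>K. {x. a k + x * b k = 0})"
    using cover by blast
  then have "infinite (\<Union>k\<in>K. {x. a k + x * b k = 0})"
    using infinite_UNIV_char_0[where 'a='a] by simp
  then obtain k where "k \<in> K" and inf: "infinite {x. a k + x * b k = 0}"
    using \<open>finite K\<close> finite_UN_I by blast
  have "b k = 0"
  proof (rule ccontr)
    assume "b k \<noteq> 0"
    then have "{x. a k + x * b k = 0} \<subseteq> {- a k / b k}"
      by (auto simp: field_simps add_eq_0_iff2)
    then show False
      using inf finite_subset by blast
  qed
  moreover have "a k = 0"
    using inf \<open>b k = 0\<close> by (cases "a k = 0") simp_all
  ultimately show ?thesis
    using \<open>k \<in> K\<close> by blast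
qed

lemma dot_plane_basis_eq_0_imp_parallel:
  fixes m y :: "'a::field ^ 3"
  assumes "m $ 1 \<noteq> 0" "dot y (vector [m$2, - m$1, 0]) = 0" "dot y (vector [m$3, 0, - m$1]) = 0"
  shows "y = (y $ 1 / m $ 1) *s m"
  using assms by (simp add: dot_def sum_3 vec_eq_iff forall_3 field_simps)

definition tetra :: "(complex ^ 3) set" where
  "tetra = {vector [1, 1, 1], vector [1, -1, -1], vector [-1, 1, -1], vector [-1, -1, 1]}"

lemma sum_tetra:
  "(\<Sum>m\<in>tetra. f m) =
     f (vector [1, 1, 1]) + f (vector [1, -1, -1]) + f (vector [-1, 1, -1]) + f (vector [-1, -1, 1])"
  unfolding tetra_def by (simp add: vec_eq_iff forall_3 add.assoc)

lemma finite_tetra [simp]: "finite tetra"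
  by (simp add: tetra_def)

lemma zero_notin_tetra [simp]: "0 \<notin> tetra"
  by (auto simp: tetra_def vec_eq_iff forall_3)

lemma tetra_sum_eq_0: "\<Sum>tetra = 0"
  by (simp add: sum_tetra vec_eq_iff forall_3)

lemma tetra_first_coord: "m \<in> tetra \<Longrightarrow> m $ 1 = 1 \<or> m $ 1 = -1"
  by (auto simp: tetra_def)

lemma tetra_combination_eq_0_imp_const:
  assumes "(\<Sum>m\<in>tetra. c m *s m) = 0" and "m \<in> tetra" and "m' \<in> tetra"
  shows "c m = c m'"
proof -
  let ?c0 = "c (vector [1, 1, 1])" and ?c1 = "c (vector [1, -1, -1])"
    and ?c2 = "c (vector [-1, 1, -1])" and ?c3 = "c (vector [-1, -1, 1])"
  have "?c0 + ?c1 - ?c2 - ?c3 = 0" "?c0 - ?c1 + ?c2 - ?c3 = 0" "?c0 - ?c1 - ?c2 + ?c3 = 0"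
    using assms(1) unfolding sum_tetra vec_eq_iff forall_3 by (simp_all add: algebra_simps)
  then have "?c1 = ?c0 \<and> ?c2 = ?c0 \<and> ?c3 = ?c0"
    by algebra
  then show ?thesis
    using assms(2,3) by (auto simp: tetra_def)
qed

lemma tetra_not_parallel:
  assumes "m \<in> tetra" "m' \<in> tetra" "c *s m = c' *s m'" "c \<noteq> 0"
  shows "m = m'"
  using assms by (auto simp: tetra_def vec_eq_iff forall_3)

lemma tetra_midpoint:
  assumes "m \<in> tetra" "m' \<in> tetra" "m \<noteq> m'"
  shows "\<exists>j. m + m' = 2 *s axis j 1 \<or> m + m' = -2 *s axis j 1"
  using assms unfolding tetra_def insert_iff empty_iff
  by (elim disjE; simp add: vec_eq_iff forall_3 ex_3 axis_def)

lemma axis_tetra_midpoint: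
  "\<exists>m\<in>tetra. \<exists>m'\<in>tetra. m \<noteq> m' \<and> 2 *s axis i 1 = m + m'"
proof -
  define m' :: "complex ^ 3" where "m' = (\<chi> j. if j = i then 1 else - 1)"
  have "m' \<in> tetra" "vector [1, 1, 1] \<noteq> m'" "2 *s axis i 1 = vector [1, 1, 1] + m'"
    using exhaust_3[of i] by (auto simp: m'_def tetra_def vec_eq_iff forall_3 axis_def)
  then show ?thesis
    unfolding tetra_def by blast
qed

lemma mem_L13_iff_squares:
  "l \<in> L13 \<longleftrightarrow>
    (\<exists>p :: 3 \<Rightarrow> complex.
      (l$1)\<^sup>2 = (p 1 - p 2)\<^sup>2 \<and> (l$2)\<^sup>2 = (p 1 - p 3)\<^sup>2 \<and> (l$3)\<^sup>2 = (p 2 - p 3)\<^sup>2)"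
  unfolding L13_def M13_def meas_def
  by (simp add: image_iff vec_eq_iff forall_3 edge_fst_def edge_snd_def eq_commute)

lemma signed_sum_eq_0_of_squares:
  fixes a b c x y :: "'a::idom"
  assumes "a\<^sup>2 = x\<^sup>2" "b\<^sup>2 = y\<^sup>2" "c\<^sup>2 = (y - x)\<^sup>2"
  shows "a + b + c = 0 \<or> a - b - c = 0 \<or> - a + b - c = 0 \<or> - a - b + c = 0"
proof -
  have "a = x \<or> a = - x" "b = y \<or> b = - y" "c = y - x \<or> c = - (y - x)"
    using assms by (simp_all add: power2_eq_iff)
  then show ?thesis
    by (elim disjE) (simp_all add: algebra_simps)
qed

lemma mem_L13_iff: "l \<in> L13 \<longleftrightarrow> (\<exists>m\<in>tetra. dot m l = 0)"
proof
  assume "l \<in> L13"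
  then obtain p :: "3 \<Rightarrow> complex"
    where "(l$1)\<^sup>2 = (p 1 - p 2)\<^sup>2" "(l$2)\<^sup>2 = (p 1 - p 3)\<^sup>2" "(l$3)\<^sup>2 = (p 2 - p 3)\<^sup>2"
    unfolding mem_L13_iff_squares by blast
  then have "(l$3)\<^sup>2 = ((p 1 - p 3) - (p 1 - p 2))\<^sup>2"
    by simp
  from signed_sum_eq_0_of_squares[OF \<open>(l$1)\<^sup>2 = _\<close> \<open>(l$2)\<^sup>2 = _\<close> this]
  show "\<exists>m\<in>tetra. dot m l = 0"
    unfolding tetra_def dot_def sum_3 by auto
next
  assume "\<exists>m\<in>tetra. dot m l = 0"
  then consider "(l$3)\<^sup>2 = (l$1 + l$2)\<^sup>2" | "(l$3)\<^sup>2 = (l$1 - l$2)\<^sup>2"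
    unfolding tetra_def dot_def sum_3 power2_eq_iff by (auto simp: algebra_simps eq_neg_iff_add_eq_0)
  then show "l \<in> L13"
  proof cases
    case 1
    then show ?thesis
      unfolding mem_L13_iff_squares
      by (intro exI[of _ "\<lambda>v. if v = 1 then 0 else if v = 2 then l$1 else - l$2"]) simp
  next
    case 2
    then show ?thesis
      unfolding mem_L13_iff_squares
      by (intro exI[of _ "\<lambda>v. if v = 1 then 0 else if v = 2 then l$1 else l$2"]) simp
  qed
qed

text \<open>Dual form of: A maps the plane of m into the plane of some m'.\<close>

lemma lin_aut_L13_maps_plane:
  assumes aut: "lin_aut_L13 A" and "m \<in> tetra"
  shows "\<exists>m'\<in>tetra. \<exists>c. c \<noteq> 0 \<and> m' v* A = c *s m"
proof -
  define u v :: "complex ^ 3" where "u = vector [m$2, - m$1, 0]" and "v = vector [m$3, 0, - m$1]"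
  have "\<exists>m'\<in>tetra. dot (m' v* A) u + x * dot (m' v* A) v = 0" for x
  proof -
    have "u + x *s v \<in> L13"
      unfolding mem_L13_iff using \<open>m \<in> tetra\<close>
      by (intro bexI[of _ m]) (simp_all add: u_def v_def dot_def sum_3 algebra_simps)
    then have "A *v (u + x *s v) \<in> L13"
      using aut unfolding lin_aut_L13_def by blast
    then show ?thesis
      by (simp add: mem_L13_iff dot_matrix_vector_mult matrix_vector_right_distrib
          vector_scalar_commute dot_add_right dot_scale_right)
  qed
  then obtain m' where "m' \<in> tetra" and u: "dot (m' v* A) u = 0" and v: "dot (m' v* A) v = 0"
    using line_in_finite_union_of_zero_sets[of tetra "\<lambda>m'. dot (m' v* A) u" "\<lambda>m'. dot (m' v* A) v"]
    by auto
  have "m $ 1 \<noteq> 0"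
    using tetra_first_coord[OF \<open>m \<in> tetra\<close>] by auto
  then have eq: "m' v* A = ((m' v* A) $ 1 / m $ 1) *s m"
    using dot_plane_basis_eq_0_imp_parallel u v unfolding u_def v_def by blast
  have "inj (\<lambda>x. x v* A)"
    using aut inj_vector_matrix_mult unfolding lin_aut_L13_def by blast
  then have "m' v* A \<noteq> 0"
    using \<open>m' \<in> tetra\<close> by (metis injD vector_matrix_mult_0 zero_notin_tetra)
  then have "(m' v* A) $ 1 / m $ 1 \<noteq> 0"
    by (subst (asm) eq) simp
  with eq \<open>m' \<in> tetra\<close> show ?thesis
    by blast
qed

lemma lin_aut_L13_permutes_tetra:
  assumes aut: "lin_aut_L13 A"
  shows "\<exists>c. c \<noteq> 0 \<and> (\<forall>m\<in>tetra. \<exists>m'\<in>tetra. m v* A = c *s m')"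
proof -
  obtain \<pi> c where \<pi>: "\<And>m. m \<in> tetra \<Longrightarrow> \<pi> m \<in> tetra \<and> c m \<noteq> 0 \<and> \<pi> m v* A = c m *s m"
    using lin_aut_L13_maps_plane[OF aut] by metis
  have "inj_on \<pi> tetra"
  proof (rule inj_onI)
    fix m m' assume "m \<in> tetra" "m' \<in> tetra" "\<pi> m = \<pi> m'"
    then have "c m *s m = c m' *s m'"
      using \<pi> by metis
    then show "m = m'"
      using tetra_not_parallel \<pi> \<open>m \<in> tetra\<close> \<open>m' \<in> tetra\<close> by blast
  qed
  moreover have "\<pi> ` tetra \<subseteq> tetra"
    using \<pi> by blast
  ultimately have surj: "\<pi> ` tetra = tetra"
    by (simp add: endo_inj_surj)
  have "(\<Sum>m\<in>tetra. c m *s m) = (\<Sum>m\<in>tetra. \<pi> m) v* A"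
    using \<pi> by (simp add: sum_vector_matrix_mult)
  also have "(\<Sum>m\<in>tetra. \<pi> m) = \<Sum>tetra"
    using sum.reindex[OF \<open>inj_on \<pi> tetra\<close>, of id] surj by simp
  finally have "(\<Sum>m\<in>tetra. c m *s m) = 0"
    by (simp add: tetra_sum_eq_0)
  then have const: "c m = c m0" if "m \<in> tetra" "m0 \<in> tetra" for m m0
    using tetra_combination_eq_0_imp_const that by blast
  obtain m0 where "m0 \<in> tetra"
    by (auto simp: tetra_def)
  show ?thesis
  proof (intro exI conjI ballI)
    show "c m0 \<noteq> 0"
      using \<pi> \<open>m0 \<in> tetra\<close> by blast
    fix m assume "m \<in> tetra"
    then obtain m' where "m' \<in> tetra" "m = \<pi> m'"
      using surj by blast
    then show "\<exists>m'\<in>tetra. m v* A = c m0 *s m'"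
      using \<pi> const \<open>m0 \<in> tetra\<close> by metis
  qed
qed

lemma rows_signed_axes_of_tetra_map:
  assumes "invertible T" and maps: "\<And>m. m \<in> tetra \<Longrightarrow> m v* T \<in> tetra"
  shows "\<exists>j. T $ i = axis j 1 \<or> T $ i = - axis j 1"
proof -
  obtain m m' where "m \<in> tetra" "m' \<in> tetra" "m \<noteq> m'" and mid: "2 *s axis i 1 = m + m'"
    using axis_tetra_midpoint by blast
  have "m v* T \<noteq> m' v* T"
    using inj_vector_matrix_mult[OF \<open>invertible T\<close>] \<open>m \<noteq> m'\<close> by (auto dest: injD)
  then obtain j where j: "m v* T + m' v* T = 2 *s axis j 1 \<or> m v* T + m' v* T = -2 *s axis j 1"
    using tetra_midpoint maps \<open>m \<in> tetra\<close> \<open>m' \<in> tetra\<close> by blast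
  have "2 *s T $ i = m v* T + m' v* T"
    by (metis axis_vector_matrix_mult mid scalar_vector_matrix_assoc vector_matrix_left_distrib)
  with j show ?thesis
    by (auto simp: vec_eq_iff)
qed

definition opposite_vertex :: "3 \<Rightarrow> 3" where
  "opposite_vertex e = (if e = 1 then 3 else if e = 2 then 2 else 1)"

lemma opposite_vertex_opposite_vertex [simp]: "opposite_vertex (opposite_vertex e) = e"
  using exhaust_3[of e] by (auto simp: opposite_vertex_def)

lemma opposite_vertex_eq_iff [simp]: "opposite_vertex a = opposite_vertex b \<longleftrightarrow> a = b"
  by (metis opposite_vertex_opposite_vertex)

lemma edge_verts_eq_Compl: "edge_verts e = - {opposite_vertex e}"
proof -
  have "x \<in> edge_verts e \<longleftrightarrow> x \<noteq> opposite_vertex e" for x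
    using exhaust_3[of e] exhaust_3[of x]
    by (elim disjE) (simp_all add: edge_verts_def opposite_vertex_def)
  then show ?thesis
    by auto
qed

lemma edge_perm_matrix_eq:
  assumes "\<sigma> permutes UNIV"
  shows "edge_perm_matrix \<sigma> = (\<chi> a b. if opposite_vertex a = \<sigma> (opposite_vertex b) then 1 else 0)"
proof -
  have "\<sigma> ` edge_verts b = - {\<sigma> (opposite_vertex b)}" for b
    using bij_image_Compl_eq[OF permutes_bij[OF assms]] by (simp add: edge_verts_eq_Compl)
  then show ?thesis
    unfolding edge_perm_matrix_def by (simp add: edge_verts_eq_Compl)
qed

lemma permutation_matrix_eq_edge_perm_matrix:
  assumes "\<tau> permutes UNIV"
  shows "\<exists>\<sigma>. \<sigma> permutes UNIV \<and> edge_perm_matrix \<sigma> = (\<chi> a b. if b = \<tau> a then 1 else 0)"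
proof -
  have opp: "opposite_vertex permutes UNIV"
    by (intro bij_imp_permutes involuntory_imp_bij) simp_all
  define \<sigma> where "\<sigma> = opposite_vertex \<circ> inv \<tau> \<circ> opposite_vertex"
  have "\<sigma> permutes UNIV"
    unfolding \<sigma>_def using opp permutes_inv[OF assms] by (intro permutes_compose)
  moreover have "opposite_vertex a = \<sigma> (opposite_vertex b) \<longleftrightarrow> b = \<tau> a" for a b
    using permutes_inv_eq[OF assms] by (auto simp: \<sigma>_def permutes_inverses[OF assms])
  ultimately show ?thesis
    using edge_perm_matrix_eq by auto
qed

lemma signed_axis_rows_decompose:
  fixes T :: "complex ^ 3 ^ 3"
  assumes "invertible T" and rows: "\<And>i. T $ i = axis (\<tau> i) 1 \<or> T $ i = - axis (\<tau> i) 1"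
  shows "\<exists>S \<sigma>. sign_diag S \<and> \<sigma> permutes UNIV \<and> T = S ** edge_perm_matrix \<sigma>"
proof -
  define s where "s i = T $ i $ \<tau> i" for i
  have s: "s i = 1 \<or> s i = -1" and row: "T $ i = s i *s axis (\<tau> i) 1" for i
    using rows[of i] by (auto simp: s_def vec_eq_iff axis_def)
  have "inj \<tau>"
  proof (rule injI)
    fix i i' assume "\<tau> i = \<tau> i'"
    then have "T $ i = (s i * s i') *s T $ i'"
      using s[of i'] by (auto simp: row)
    then show "i = i'"
      using invertible_rows_not_parallel[OF assms(1)] by blast
  qed
  then have "\<tau> permutes UNIV"
    by (intro bij_imp_permutes) (simp_all add: bij_def finite_UNIV_inj_surj)
  then obtain \<sigma> where "\<sigma> permutes UNIV"
    and P: "edge_perm_matrix \<sigma> = (\<chi> a b. if b = \<tau> a then 1 else 0)"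
    using permutation_matrix_eq_edge_perm_matrix by blast
  define S where "S = (\<chi> a b. if a = b then s a else 0)"
  have "sign_diag S"
    using s by (simp add: sign_diag_def S_def)
  moreover have "T = S ** edge_perm_matrix \<sigma>"
    by (simp add: vec_eq_iff S_def P diag_mult_component row axis_def)
  ultimately show ?thesis
    using \<open>\<sigma> permutes UNIV\<close> by blast
qed

lemma tetra_map_signed_edge_perm:
  assumes "invertible T" and "\<And>m. m \<in> tetra \<Longrightarrow> m v* T \<in> tetra"
  shows "\<exists>S \<sigma>. sign_diag S \<and> \<sigma> permutes UNIV \<and> T = S ** edge_perm_matrix \<sigma>"
proof -
  have "\<forall>i. \<exists>j. T $ i = axis j 1 \<or> T $ i = - axis j 1"
    using rows_signed_axes_of_tetra_map[OF assms] by blast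
  then obtain \<tau> where "\<forall>i. T $ i = axis (\<tau> i) 1 \<or> T $ i = - axis (\<tau> i) 1"
    by (rule choice[THEN exE])
  then show ?thesis
    using signed_axis_rows_decompose[OF assms(1), of \<tau>] by blast
qed

lemma lin_aut_L13_scalar_times_tetra_map:
  assumes "lin_aut_L13 A"
  obtains c T where "c \<noteq> 0" "A = mat c ** T" "invertible T" "\<And>m. m \<in> tetra \<Longrightarrow> m v* T \<in> tetra"
proof -
  obtain c where "c \<noteq> 0" and c: "\<forall>m\<in>tetra. \<exists>m'\<in>tetra. m v* A = c *s m'"
    using lin_aut_L13_permutes_tetra[OF assms] by blast
  define T where "T = mat (inverse c) ** A"
  have "A = mat c ** T"
    using \<open>c \<noteq> 0\<close> by (simp add: T_def vec_eq_iff mat_mult_component)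
  moreover have "invertible T"
    using assms \<open>c \<noteq> 0\<close> unfolding T_def lin_aut_L13_def by (simp add: invertible_mult invertible_mat)
  moreover have "m v* T \<in> tetra" if "m \<in> tetra" for m
  proof -
    obtain m' where "m' \<in> tetra" and "m v* A = c *s m'"
      using c \<open>m \<in> tetra\<close> by blast
    have "m v* T = inverse c *s (m v* A)"
      unfolding T_def vector_matrix_mul_assoc[symmetric]
      by (simp add: vector_matrix_mult_mat scalar_vector_matrix_assoc)
    also have "\<dots> = m'"
      using \<open>m v* A = c *s m'\<close> \<open>c \<noteq> 0\<close> by (simp add: vector_smult_assoc)
    finally show ?thesis
      using \<open>m' \<in> tetra\<close> by simp
  qed
  ultimately show ?thesis
    using \<open>c \<noteq> 0\<close> that by blast
qed

theorem theorem5p27: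
  fixes A :: "complex ^ 3 ^ 3"
  assumes "lin_aut_L13 A"
  shows "\<exists>(c::complex) S \<sigma>. c \<noteq> 0 \<and> sign_diag S \<and> \<sigma> permutes (UNIV :: 3 set) \<and>
           A = mat c ** (S ** edge_perm_matrix \<sigma>)"
proof -
  obtain c T where "c \<noteq> 0" "A = mat c ** T" "invertible T" "\<And>m. m \<in> tetra \<Longrightarrow> m v* T \<in> tetra"
    using lin_aut_L13_scalar_times_tetra_map[OF assms] by blast
  moreover obtain S \<sigma> where "sign_diag S" "\<sigma> permutes UNIV" "T = S ** edge_perm_matrix \<sigma>"
    using tetra_map_signed_edge_perm[OF \<open>invertible T\<close>] \<open>\<And>m. m \<in> tetra \<Longrightarrow> m v* T \<in> tetra\<close> by blast
  ultimately show ?thesis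
    by blast
qed

end
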